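(* Let $G$ be a connected graph with a vertex $u$ of degree $1$ and a vertex $v$ of maximum degree $\Delta \geq 2$ such that $u$ and $v$ are not adjacent. Then $mp(G+uv) \leq mp(G)$; in particular $G$ is not saturated.
   Context: All graphs are finite and simple. A degree monotone path in a graph $G$ is a path $v_1v_2\ldots v_m$ such that $\deg(v_1)\le \cdots\le \deg(v_m)$ or $\deg(v_1)\ge \cdots\ge \deg(v_m)$ (degrees taken in $G$); its length is its number of vertices. $mp(G)$ denotes the maximum length of a degree monotone path in $G$. $G+uv$ denotes $G$ with the edge $uv$ added. A graph $G$ is saturated if $mp(G+e)>mp(G)$ for every pair $e$ of non-adjacent vertices of $G$. *)

theory Defs
  imports Main
begin

definition graph :: "'a set \<Rightarrow> 'a set set \<Rightarrow> bool" where
  "graph V E \<longleftrightarrow> finite V \<and> (\<forall>e\<in>E. e \<subseteq> V \<and> card e = 2)"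

definition adj :: "'a set set \<Rightarrow> 'a \<Rightarrow> 'a \<Rightarrow> bool" where
  "adj E x y \<longleftrightarrow> {x, y} \<in> E"

definition deg :: "'a set \<Rightarrow> 'a set set \<Rightarrow> 'a \<Rightarrow> nat" where
  "deg V E x = card {y \<in> V. adj E x y}"

definition max_deg :: "'a set \<Rightarrow> 'a set set \<Rightarrow> nat" where
  "max_deg V E = Max (deg V E ` V)"

definition connected_graph :: "'a set \<Rightarrow> 'a set set \<Rightarrow> bool" where
  "connected_graph V E \<longleftrightarrow> V \<noteq> {} \<and>
     (\<forall>x\<in>V. \<forall>y\<in>V. (\<lambda>a b. adj E a b)\<^sup>*\<^sup>* x y)"

definition is_path :: "'a set \<Rightarrow> 'a set set \<Rightarrow> 'a list \<Rightarrow> bool" where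
  "is_path V E xs \<longleftrightarrow> xs \<noteq> [] \<and> distinct xs \<and> set xs \<subseteq> V \<and>
     (\<forall>i. Suc i < length xs \<longrightarrow> adj E (xs ! i) (xs ! Suc i))"

definition dm_path :: "'a set \<Rightarrow> 'a set set \<Rightarrow> 'a list \<Rightarrow> bool" where
  "dm_path V E xs \<longleftrightarrow> is_path V E xs \<and>
     (sorted (map (deg V E) xs) \<or> sorted (rev (map (deg V E) xs)))"

definition mp :: "'a set \<Rightarrow> 'a set set \<Rightarrow> nat" where
  "mp V E = Max {length xs | xs. dm_path V E xs}"

definition add_edge :: "'a set set \<Rightarrow> 'a \<Rightarrow> 'a \<Rightarrow> 'a set set" where
  "add_edge E u v = insert {u, v} E"

definition saturated :: "'a set \<Rightarrow> 'a set set \<Rightarrow> bool" where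
  "saturated V E \<longleftrightarrow>
     (\<forall>x\<in>V. \<forall>y\<in>V. x \<noteq> y \<and> \<not> adj E x y \<longrightarrow> mp V (add_edge E x y) > mp V E)"

end

theory Submission
  imports Defs
begin

text \<open>Let P be a longest degree monotone path of G + uv, oriented so that degrees
  increase. Only u (degree 2 instead of 1) and v (degree \<Delta> + 1, the unique maximum)
  change their degrees. If P visits u at most as its first vertex and does not use the
  edge uv, it is already degree monotone in G. Otherwise its vertices before u have
  degree at most 2, and u is followed by at most one vertex. Read backwards, the
  segment ending at u is a path from the leaf u through vertices of degree at most 2
  that misses v; by connectivity it can only be left at its far end, and the neighbour
  reached there has degree at least 2, so the segment plus that neighbour is a degree
  monotone path of G at least as long as P.\<close>

lemma sorted_map_transfer:
  assumes "sorted (map g xs)"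
    and "\<And>x y. x \<in> set xs \<Longrightarrow> y \<in> set (tl xs) \<Longrightarrow> g x \<le> g y \<Longrightarrow> f x \<le> (f y :: 'b :: linorder)"
  shows "sorted (map f xs)"
  using assms
proof (induction xs)
  case (Cons x xs)
  have "y \<in> set xs" if "y \<in> set (tl xs)" for y
    using that by (cases xs) auto
  then have "sorted (map f xs)"
    using Cons.prems by (intro Cons.IH) auto
  moreover have "\<forall>y\<in>set xs. f x \<le> f y"
    using Cons.prems by simp
  ultimately show ?case by simp
qed simp

lemma adj_commute: "adj E x y \<longleftrightarrow> adj E y x"
  by (simp add: adj_def insert_commute)

lemma adj_in_vertices:
  assumes "graph V E" "adj E x y"
  shows "x \<in> V" "y \<in> V" "x \<noteq> y"
proof -
  have "{x, y} \<subseteq> V" "card {x, y} = 2"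
    using assms by (auto simp: graph_def adj_def)
  then show "x \<in> V" "y \<in> V" "x \<noteq> y"
    by (fastforce, fastforce, force)
qed

lemma card_le_deg:
  assumes "graph V E" "\<forall>y\<in>S. adj E x y"
  shows "card S \<le> deg V E x"
  unfolding deg_def
proof (rule card_mono)
  show "finite {y \<in> V. adj E x y}"
    using assms(1) by (simp add: graph_def)
  show "S \<subseteq> {y \<in> V. adj E x y}"
    using assms(2) adj_in_vertices(2)[OF assms(1)] by blast
qed

lemma two_neighbours_deg:
  assumes "graph V E" "adj E x a" "adj E x b" "a \<noteq> b"
  shows "2 \<le> deg V E x"
  using card_le_deg[OF assms(1), of "{a, b}" x] assms by simp

lemma three_neighbours_deg:
  assumes "graph V E" "adj E x a" "adj E x b" "adj E x c" "a \<noteq> b" "a \<noteq> c" "b \<noteq> c"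
  shows "3 \<le> deg V E x"
  using card_le_deg[OF assms(1), of "{a, b, c}" x] assms by simp

lemma deg_le_max_deg:
  assumes "graph V E" "x \<in> V"
  shows "deg V E x \<le> max_deg V E"
  using assms unfolding max_deg_def graph_def by simp

lemma is_path_iff_successively:
  "is_path V E xs \<longleftrightarrow> xs \<noteq> [] \<and> distinct xs \<and> set xs \<subseteq> V \<and> successively (adj E) xs"
  by (simp add: is_path_def successively_conv_nth)

lemma is_path_rev: "is_path V E (rev xs) \<longleftrightarrow> is_path V E xs"
  by (simp add: is_path_iff_successively adj_commute)

lemma is_path_prefix:
  "is_path V E (xs @ ys) \<Longrightarrow> xs \<noteq> [] \<Longrightarrow> is_path V E xs"
  by (auto simp: is_path_iff_successively successively_append_iff)

lemma is_path_snoc: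
  "is_path V E xs \<Longrightarrow> y \<in> V \<Longrightarrow> y \<notin> set xs \<Longrightarrow> adj E (last xs) y \<Longrightarrow> is_path V E (xs @ [y])"
  by (auto simp: is_path_iff_successively successively_append_iff)

lemma is_path_split_neighbours:
  assumes "is_path V E (ys @ x # zs)"
  shows "ys \<noteq> [] \<Longrightarrow> adj E x (last ys)" "zs \<noteq> [] \<Longrightarrow> adj E x (hd zs)"
proof -
  have "successively (adj E) (ys @ x # zs)"
    using assms by (simp add: is_path_iff_successively)
  then show "ys \<noteq> [] \<Longrightarrow> adj E x (last ys)" "zs \<noteq> [] \<Longrightarrow> adj E x (hd zs)"
    by (auto simp: successively_append_iff successively_Cons intro: adj_commute[THEN iffD1])
qed

lemma interior_vertex_deg:
  assumes G: "graph V E" and P: "is_path V E (ys @ x # zs)" and "ys \<noteq> []" "zs \<noteq> []"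
  shows "2 \<le> deg V E x"
proof -
  have "last ys \<in> set ys" "hd zs \<in> set zs" "set ys \<inter> set zs = {}"
    using P assms(3,4) by (simp_all add: is_path_iff_successively)
  then have "last ys \<noteq> hd zs" by (metis disjoint_iff)
  with is_path_split_neighbours[OF P] assms(3,4) show ?thesis
    by (intro two_neighbours_deg[OF G]) simp_all
qed

lemma connected_graph_exit_edge:
  assumes "connected_graph V E" "a \<in> V" "b \<in> V" "a \<in> S" "b \<notin> S"
  obtains x y where "x \<in> S" "y \<notin> S" "adj E x y"
proof -
  have "(adj E)\<^sup>*\<^sup>* a b"
    using assms(1-3) unfolding connected_graph_def by auto
  moreover have "(adj E)\<^sup>*\<^sup>* a c \<Longrightarrow> c \<notin> S \<Longrightarrow> \<exists>x y. x \<in> S \<and> y \<notin> S \<and> adj E x y" for c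
  proof (induction rule: rtranclp_induct)
    case (step y z)
    then show ?case by (cases "y \<in> S") auto
  qed (use assms(4) in auto)
  ultimately show ?thesis
    using assms(5) that by blast
qed

lemma length_dm_path_le_card:
  assumes "finite V" "dm_path V E xs"
  shows "length xs \<le> card V"
  using assms distinct_card[of xs] card_mono[of V "set xs"]
  by (auto simp: dm_path_def is_path_def)

lemma finite_dm_path_lengths: "finite V \<Longrightarrow> finite {length xs | xs. dm_path V E xs}"
  by (rule finite_subset[of _ "{..card V}"]) (auto dest: length_dm_path_le_card)

lemma mp_le_mp:
  assumes "finite V" "V \<noteq> {}"
    and lift: "\<And>P. dm_path V F P \<Longrightarrow> \<exists>Q. dm_path V E Q \<and> length P \<le> length Q"
  shows "mp V F \<le> mp V E"
proof -
  obtain x where "x \<in> V" using assms(2) by blast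
  then have "dm_path V F [x]"
    by (simp add: dm_path_def is_path_def)
  then have "mp V F \<in> {length xs | xs. dm_path V F xs}"
    unfolding mp_def using finite_dm_path_lengths[OF assms(1)] by (intro Max_in) auto
  then obtain P where P: "dm_path V F P" "length P = mp V F" by auto
  obtain Q where Q: "dm_path V E Q" "length P \<le> length Q" using lift[OF P(1)] by blast
  have "length Q \<le> mp V E"
    unfolding mp_def using finite_dm_path_lengths[OF assms(1)] Q(1) by (intro Max_ge) auto
  with P Q show ?thesis by simp
qed

lemma add_edge_commute: "add_edge E u v = add_edge E v u"
  by (simp add: add_edge_def insert_commute)

lemma adj_add_edge:
  "adj (add_edge E u v) x y \<longleftrightarrow> adj E x y \<or> (x = u \<and> y = v) \<or> (x = v \<and> y = u)"
  unfolding add_edge_def adj_def by (auto simp: doubleton_eq_iff)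

lemma deg_add_edge_other:
  "x \<noteq> u \<Longrightarrow> x \<noteq> v \<Longrightarrow> deg V (add_edge E u v) x = deg V E x"
  unfolding deg_def by (simp add: adj_add_edge)

lemma deg_add_edge_endpoint:
  assumes "finite V" "v \<in> V" "u \<noteq> v" "\<not> adj E u v"
  shows "deg V (add_edge E u v) u = Suc (deg V E u)"
proof -
  have "{y \<in> V. adj (add_edge E u v) u y} = insert v {y \<in> V. adj E u y}"
    using assms(2,3) by (auto simp: adj_add_edge)
  then show ?thesis
    using assms(1,4) unfolding deg_def by simp
qed

lemma successively_adj_add_edge_avoiding:
  "successively (adj (add_edge E u v)) P \<Longrightarrow> u \<notin> set P \<Longrightarrow> successively (adj E) P"
  by (erule successively_mono) (auto simp: adj_add_edge)

lemma is_path_add_edge_avoiding: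
  "is_path V (add_edge E u v) P \<Longrightarrow> u \<notin> set P \<Longrightarrow> is_path V E P"
  using successively_adj_add_edge_avoiding by (fastforce simp: is_path_iff_successively)

text \<open>An inner vertex already has two neighbours on the path, and u its only one.\<close>
lemma leaf_path_exit_at_last:
  assumes G: "graph V E" and P: "is_path V E (u # xs)" and u: "deg V E u = 1"
    and low: "\<forall>x\<in>set xs. deg V E x \<le> 2"
    and a: "a \<in> set (u # xs)" and b: "b \<notin> set (u # xs)" and ab: "adj E a b"
  shows "a = last (u # xs)"
proof (rule ccontr)
  assume not_last: "a \<noteq> last (u # xs)"
  obtain ys zs where split: "u # xs = ys @ a # zs"
    using a split_list by metis
  with not_last have "zs \<noteq> []" by auto
  have P': "is_path V E (ys @ a # zs)" and dist: "distinct (ys @ a # zs)"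
    using P split by (simp_all add: is_path_iff_successively)
  have az: "adj E a (hd zs)" and zb: "hd zs \<noteq> b"
    using is_path_split_neighbours(2)[OF P'] \<open>zs \<noteq> []\<close> b split by auto
  show False
  proof (cases "ys = []")
    case True
    then have "a = u" using split by simp
    with two_neighbours_deg[OF G az ab zb] u show False by simp
  next
    case False
    have "adj E a (last ys)"
      using is_path_split_neighbours(1)[OF P'] False by simp
    moreover have "last ys \<in> set ys" "hd zs \<in> set zs"
      using False \<open>zs \<noteq> []\<close> by simp_all
    then have "last ys \<noteq> hd zs" "last ys \<noteq> b"
      using dist b split by auto
    ultimately have "3 \<le> deg V E a"
      using three_neighbours_deg[OF G _ az ab] zb by blast
    moreover have "a \<in> set xs"
      using split dist False by (cases ys) auto
    ultimately show False using low by fastforce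
  qed
qed

text \<open>If b had degree 1, the path extended by b could not be left at all, yet it misses w.\<close>
lemma leaf_path_exit_neighbour_deg:
  assumes G: "graph V E" and C: "connected_graph V E" and P: "is_path V E (u # xs)"
    and u: "deg V E u = 1" and low: "\<forall>x\<in>set xs. deg V E x \<le> 2"
    and w: "w \<in> V" "w \<notin> set (u # xs)" "2 \<le> deg V E w"
    and b: "b \<notin> set (u # xs)" "adj E (last (u # xs)) b"
  shows "2 \<le> deg V E b"
proof (rule ccontr)
  assume b_low: "\<not> 2 \<le> deg V E b"
  have P': "is_path V E (u # xs @ [b])"
    using is_path_snoc[OF P _ b] adj_in_vertices(2)[OF G b(2)] by simp
  have uV: "u \<in> V"
    using P by (simp add: is_path_def)
  have "w \<notin> set (u # xs @ [b])"
    using w b_low by auto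
  then obtain a' b' where a'b': "a' \<in> set (u # xs @ [b])" "b' \<notin> set (u # xs @ [b])" "adj E a' b'"
    using connected_graph_exit_edge[OF C uV w(1), of "set (u # xs @ [b])"] by auto
  have "a' = b"
    using leaf_path_exit_at_last[OF G P' u _ a'b'] low b_low by simp
  moreover have "adj E b (last (u # xs))"
    using b(2) adj_commute by metis
  moreover have "last (u # xs) \<noteq> b'"
    using a'b'(2) last_in_set[of "u # xs"] by auto
  ultimately have "2 \<le> deg V E b"
    using two_neighbours_deg[OF G, of b "last (u # xs)" b'] a'b'(3) by blast
  with b_low show False ..
qed

lemma leaf_path_extends:
  assumes G: "graph V E" and C: "connected_graph V E" and P: "is_path V E (u # xs)"
    and u: "deg V E u = 1" and low: "\<forall>x\<in>set xs. deg V E x \<le> 2"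
    and w: "w \<in> V" "w \<notin> set (u # xs)" "2 \<le> deg V E w"
  shows "\<exists>b. dm_path V E (u # xs @ [b])"
proof -
  have uV: "u \<in> V"
    using P by (simp add: is_path_def)
  obtain a b where ab: "a \<in> set (u # xs)" "b \<notin> set (u # xs)" "adj E a b"
    using connected_graph_exit_edge[OF C uV w(1), of "set (u # xs)"] w(2) by auto
  then have b: "b \<notin> set (u # xs)" "adj E (last (u # xs)) b"
    using leaf_path_exit_at_last[OF G P u low] by auto
  then have P': "is_path V E (u # xs @ [b])"
    using is_path_snoc[OF P _ b] adj_in_vertices(2)[OF G b(2)] by simp
  have "deg V E x = 2" if x: "x \<in> set xs" for x
  proof -
    obtain ys zs where "xs = ys @ x # zs"
      using split_list[OF x] by blast
    then have "2 \<le> deg V E x"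
      using interior_vertex_deg[OF G, of "u # ys" x "zs @ [b]"] P' by simp
    with low x show ?thesis by fastforce
  qed
  then have "map (deg V E) xs = replicate (length xs) 2"
    by (simp add: map_replicate_const[symmetric] cong: map_cong)
  moreover have "2 \<le> deg V E b"
    using leaf_path_exit_neighbour_deg[OF G C P u low w b] .
  ultimately have "sorted (map (deg V E) (u # xs @ [b]))"
    using u by (simp add: sorted_append)
  with P' show ?thesis
    by (auto simp: dm_path_def)
qed

locale leaf_and_max_degree_vertex =
  fixes V :: "'a set" and E :: "'a set set" and u v :: 'a
  assumes graph: "graph V E" and connected: "connected_graph V E"
    and u_in: "u \<in> V" and v_in: "v \<in> V"
    and deg_u: "deg V E u = 1" and deg_v: "deg V E v = max_deg V E"
    and max_deg_ge_2: "2 \<le> max_deg V E" and not_adj: "\<not> adj E u v"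
begin

abbreviation E' :: "'a set set" where
  "E' \<equiv> add_edge E u v"

lemma u_neq_v: "u \<noteq> v"
  using deg_u deg_v max_deg_ge_2 by auto

lemma finite_V: "finite V"
  using graph by (simp add: graph_def)

lemma deg'_u: "deg V E' u = 2"
  using deg_add_edge_endpoint[OF finite_V v_in u_neq_v not_adj] deg_u by simp

lemma deg'_v: "deg V E' v = Suc (max_deg V E)"
proof -
  have "\<not> adj E v u"
    using not_adj adj_commute by metis
  then show ?thesis
    using deg_add_edge_endpoint[OF finite_V u_in u_neq_v[symmetric]] deg_v
    by (simp add: add_edge_commute)
qed

lemma deg'_le_max_deg: "x \<in> V \<Longrightarrow> x \<noteq> v \<Longrightarrow> deg V E' x \<le> max_deg V E"
  using deg'_u deg_add_edge_other[of x u v] deg_le_max_deg[OF graph] max_deg_ge_2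
  by (cases "x = u") auto

text \<open>Only the degrees of u and v change, and v has maximum degree before and after.\<close>
lemma deg_le_deg_if_deg'_le:
  assumes "x \<in> V" "y \<in> V" "y \<noteq> u" "deg V E' x \<le> deg V E' y"
  shows "deg V E x \<le> deg V E y"
proof (cases "y = v")
  case True
  then show ?thesis
    using deg_le_max_deg[OF graph assms(1)] deg_v by simp
next
  case False
  then have y: "deg V E' y = deg V E y"
    using assms(3) deg_add_edge_other by metis
  consider "x = u" | "x = v" | "x \<noteq> u" "x \<noteq> v" by blast
  then show ?thesis
  proof cases
    case 1
    then show ?thesis using assms(4) y deg_u deg'_u by simp
  next
    case 2
    then show ?thesis using assms(4) deg'_v deg'_le_max_deg[OF assms(2) False] by simp
  next
    case 3
    then show ?thesis using assms(4) y deg_add_edge_other by metis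
  qed
qed

lemma dm_path_if_not_through_u:
  assumes P: "is_path V E' P" and sorted: "sorted (map (deg V E') P)"
    and u_tl: "u \<notin> set (tl P)" and start: "take 2 P \<noteq> [u, v]"
  shows "dm_path V E P"
proof -
  obtain x P' where P_eq: "P = x # P'"
    using P by (cases P) (auto simp: is_path_def)
  have "successively (adj E') (x # P')"
    using P P_eq by (simp add: is_path_iff_successively)
  moreover have "adj E x (hd P')" if "P' \<noteq> []" "adj E' x (hd P')"
  proof -
    have "hd P' \<noteq> u" "x = u \<longrightarrow> hd P' \<noteq> v"
      using that(1) u_tl start P_eq by (auto simp: neq_Nil_conv)
    with that(2) show ?thesis
      by (auto simp: adj_add_edge)
  qed
  ultimately have "successively (adj E) (x # P')"
    using successively_adj_add_edge_avoiding[of E u v P'] u_tl P_eq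
    by (auto simp: successively_Cons)
  then have "is_path V E P"
    using P P_eq by (simp add: is_path_iff_successively)
  moreover have "sorted (map (deg V E) P)"
  proof (rule sorted_map_transfer[OF sorted])
    fix x y assume "x \<in> set P" "y \<in> set (tl P)" "deg V E' x \<le> deg V E' y"
    moreover have "set P \<subseteq> V" "set (tl P) \<subseteq> set P"
      using P P_eq by (auto simp: is_path_def)
    ultimately show "deg V E x \<le> deg V E y"
      using deg_le_deg_if_deg'_le u_tl by blast
  qed
  ultimately show ?thesis
    by (simp add: dm_path_def)
qed

lemma before_u_in_sorted_path:
  assumes sorted: "sorted (map (deg V E') (xs @ u # ys))" and dist: "distinct (xs @ u # ys)"
  shows "v \<notin> set xs" "\<forall>x\<in>set xs. deg V E x \<le> 2"
proof -
  have low': "\<forall>x\<in>set xs. deg V E' x \<le> 2"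
    using sorted deg'_u by (simp add: sorted_append)
  then show v_notin: "v \<notin> set xs"
    using deg'_v max_deg_ge_2 by fastforce
  show "\<forall>x\<in>set xs. deg V E x \<le> 2"
  proof
    fix x assume x: "x \<in> set xs"
    then have "x \<noteq> u" "x \<noteq> v"
      using dist v_notin by auto
    moreover have "deg V E' x \<le> 2"
      using low' x by blast
    ultimately show "deg V E x \<le> 2"
      by (simp add: deg_add_edge_other)
  qed
qed

lemma after_u_in_sorted_path:
  assumes P: "is_path V E' (xs @ u # ys)" and sorted: "sorted (map (deg V E') (xs @ u # ys))"
    and start: "xs = [] \<Longrightarrow> take 1 ys = [v]"
  shows "length ys \<le> 1"
proof (rule ccontr)
  assume "\<not> length ys \<le> 1"
  then obtain y y' zs where ys: "ys = y # y' # zs"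
    by (cases ys; cases "tl ys") auto
  have dist: "distinct (xs @ u # ys)" and in_V: "set (xs @ u # ys) \<subseteq> V"
    using P by (simp_all add: is_path_iff_successively)
  have "y \<noteq> v"
  proof
    assume "y = v"
    then have "Suc (max_deg V E) \<le> deg V E' y'"
      using sorted ys deg'_v by (simp add: sorted_append)
    moreover have "y' \<in> V" "y' \<noteq> v"
      using in_V dist ys \<open>y = v\<close> by auto
    ultimately show False
      using deg'_le_max_deg by fastforce
  qed
  then have "xs \<noteq> []"
    using start ys by auto
  have "adj E' u (last xs)" "adj E' u y"
    using is_path_split_neighbours[OF P] \<open>xs \<noteq> []\<close> ys by simp_all
  moreover have "last xs \<noteq> v"
    using before_u_in_sorted_path(1)[OF sorted dist] \<open>xs \<noteq> []\<close> by auto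
  ultimately have "adj E u (last xs)" "adj E u y"
    using \<open>y \<noteq> v\<close> by (auto simp: adj_add_edge)
  moreover have "last xs \<noteq> y"
    using dist ys \<open>xs \<noteq> []\<close> by auto
  ultimately have "2 \<le> deg V E u"
    by (rule two_neighbours_deg[OF graph])
  with deg_u show False by simp
qed

lemma dm_path_lift_through_u:
  assumes P: "is_path V E' (xs @ u # ys)" and sorted: "sorted (map (deg V E') (xs @ u # ys))"
    and start: "xs = [] \<Longrightarrow> take 1 ys = [v]"
  shows "\<exists>Q. dm_path V E Q \<and> length (xs @ u # ys) \<le> length Q"
proof -
  have dist: "distinct (xs @ u # ys)"
    using P by (simp add: is_path_iff_successively)
  note v_notin = before_u_in_sorted_path(1)[OF sorted dist]
  have "is_path V E' (xs @ [u])"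
    using is_path_prefix[of V E' "xs @ [u]" ys] P by simp
  then have "is_path V E (xs @ [u])"
    using is_path_add_edge_avoiding[of V E v u] v_notin u_neq_v
    by (simp add: add_edge_commute)
  then have path: "is_path V E (u # rev xs)"
    using is_path_rev[of V E "xs @ [u]"] by simp
  obtain b where "dm_path V E (u # rev xs @ [b])"
    using leaf_path_extends[OF graph connected path deg_u _ v_in]
      before_u_in_sorted_path[OF sorted dist] u_neq_v deg_v max_deg_ge_2 by fastforce
  with after_u_in_sorted_path[OF P sorted start] show ?thesis
    by (intro exI[of _ "u # rev xs @ [b]"]) simp
qed

lemma dm_path_lift_sorted:
  assumes P: "is_path V E' P" and sorted: "sorted (map (deg V E') P)"
  shows "\<exists>Q. dm_path V E Q \<and> length P \<le> length Q"
proof (cases "u \<in> set (tl P) \<or> take 2 P = [u, v]")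
  case True
  then obtain xs ys where P_eq: "P = xs @ u # ys" and start: "xs = [] \<Longrightarrow> take 1 ys = [v]"
  proof
    assume "u \<in> set (tl P)"
    then obtain xs' ys where "tl P = xs' @ u # ys"
      using split_list by metis
    with P have "P = (hd P # xs') @ u # ys"
      by (cases P) (auto simp: is_path_def)
    then show thesis using that by blast
  next
    assume "take 2 P = [u, v]"
    then have "P = [] @ u # (v # drop 2 P)"
      using append_take_drop_id[of 2 P] by simp
    then show thesis using that by fastforce
  qed
  then show ?thesis
    using dm_path_lift_through_u P sorted by blast
next
  case False
  then show ?thesis
    using dm_path_if_not_through_u[OF P sorted] by blast
qed

lemma dm_path_lift:
  assumes "dm_path V E' P"
  shows "\<exists>Q. dm_path V E Q \<and> length P \<le> length Q"
proof -
  have "is_path V E' P" "is_path V E' (rev P)"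
    using assms by (simp_all add: dm_path_def is_path_rev)
  moreover have "sorted (map (deg V E') P) \<or> sorted (map (deg V E') (rev P))"
    using assms by (simp add: dm_path_def rev_map)
  ultimately show ?thesis
    using dm_path_lift_sorted by (metis length_rev)
qed

lemma mp_add_edge_le: "mp V E' \<le> mp V E"
  using mp_le_mp[OF finite_V _ dm_path_lift] u_in by blast

lemma not_saturated: "\<not> saturated V E"
  using mp_add_edge_le u_in v_in u_neq_v not_adj unfolding saturated_def by fastforce

end

theorem lemma2p2:
  fixes V :: "'a set" and E :: "'a set set" and u v :: 'a
  assumes "graph V E"
    and "connected_graph V E"
    and "u \<in> V" and "v \<in> V"
    and "deg V E u = 1"
    and "deg V E v = max_deg V E"
    and "max_deg V E \<ge> 2"
    and "\<not> adj E u v"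
  shows "mp V (add_edge E u v) \<le> mp V E \<and> \<not> saturated V E"
proof -
  interpret leaf_and_max_degree_vertex V E u v
    using assms by unfold_locales
  show ?thesis
    using mp_add_edge_le not_saturated by simp
qed

end
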